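(* Let $n$ and $0<n_1<\cdots<n_d<n$ be integers and let $\varepsilon:\mathrm{Flag}(n_1,\dots,n_d;n)\to\mathrm{O}(n)^d\subseteq(\mathbb{R}^{n\times n})^d$ be the classical embedding. Let $g^e$ be the Riemannian metric on $\mathrm{Flag}(n_1,\dots,n_d;n)$ induced by $\varepsilon$ from the Euclidean metric on $(\mathbb{R}^{n\times n})^d$, and $\tilde g^e$ the metric induced by the modified embedding $\tilde\varepsilon:\mathrm{Flag}(n_1,\dots,n_d;n)\to(\mathbb{R}^{n\times n})^{d+1}$ from the Euclidean metric on $(\mathbb{R}^{n\times n})^{d+1}$. For a smooth map $\varphi:(\mathbb{R}^{n\times n})^d\to\mathbb{R}^{n\times n}$, let $\kappa_\varphi(A_1,\dots,A_d)=(A_1,\dots,A_d,\varphi(A_1,\dots,A_d))$ and let $g^\varphi$ be the metric on $\mathrm{Flag}(n_1,\dots,n_d;n)$ induced by the embedding $\kappa_\varphi\circ\varepsilon$ from the Euclidean metric on $(\mathbb{R}^{n\times n})^{d+1}$. Then: (i) $g^\varphi=g^e$ if and only if $\varphi$ is constant on $\varepsilon(\mathrm{Flag}(n_1,\dots,n_d;n))$; in particular $g^\varphi=g^e$ whenever $\varphi$ is constant. (ii) There exists a smooth $\varphi$ such that $g^\varphi=\tilde g^e$.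
   Context: Set $m_1=n_1$, $m_k=n_k-n_{k-1}$ ($2\le k\le d$), $m_{d+1}=n-n_d$. For a flag $\mathbb{V}_1\subsetneq\cdots\subsetneq\mathbb{V}_d\subsetneq\mathbb{R}^n$ ($\dim\mathbb{V}_k=n_k$) let $\mathbb{W}_1=\mathbb{V}_1$, $\mathbb{W}_k$ the orthogonal complement of $\mathbb{V}_{k-1}$ in $\mathbb{V}_k$ ($2\le k\le d$), $\mathbb{W}_{d+1}=\mathbb{V}_d^\perp$, and $Q_k=2P_{\mathbb{W}_k}-I_n$ with $P_{\mathbb{W}}$ the orthogonal projection onto $\mathbb{W}$. The classical embedding is $\varepsilon(\text{flag})=(Q_1,\dots,Q_d)$ and the modified embedding is $\tilde\varepsilon(\text{flag})=(Q_1,\dots,Q_{d+1})$. The Euclidean metric on $(\mathbb{R}^{n\times n})^r$ is $\sum_k\operatorname{tr}(X_k^{\mathsf T}Y_k)$. *)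

theory Defs
  imports "HOL-Analysis.Analysis"
begin

(* C^infinity maps between finite-dimensional real normed spaces:
   f is differentiable everywhere and every directional derivative
   x \<mapsto> f'(x) v is again C^infinity (greatest fixed point). *)
coinductive smooth_map :: "('a::euclidean_space \<Rightarrow> 'b::euclidean_space) \<Rightarrow> bool" where
  "(\<And>x. (f has_derivative f' x) (at x)) \<Longrightarrow> (\<And>v. smooth_map (\<lambda>x. f' x v))
   \<Longrightarrow> smooth_map f"

definition orth_proj_vec :: "(real^'n) set \<Rightarrow> real^'n \<Rightarrow> real^'n" where
  "orth_proj_vec W x = (THE y. y \<in> W \<and> x - y \<in> orthogonal_comp W)"

definition proj_mat :: "(real^'n) set \<Rightarrow> real^'n^'n" where
  "proj_mat W = matrix (orth_proj_vec W)"

definition Qmat :: "(real^'n) set \<Rightarrow> real^'n^'n" where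
  "Qmat W = 2 *\<^sub>R proj_mat W - mat 1"

(* Flags V_1 \<subset> ... \<subset> V_d in R^n, indexed by the finite well-ordered type 'd
   (so d = CARD('d)), with dim V_k = ns k. *)
definition flags :: "('d::{finite,wellorder} \<Rightarrow> nat) \<Rightarrow> (('d::{finite,wellorder}) \<Rightarrow> (real^'n) set) set" where
  "flags ns = {V. (\<forall>k. subspace (V k) \<and> dim (V k) = ns k) \<and> (\<forall>j k. j < k \<longrightarrow> V j \<subset> V k)}"

definition Wsp :: "('d::{finite,wellorder} \<Rightarrow> (real^'n) set) \<Rightarrow> ('d::{finite,wellorder}) \<Rightarrow> (real^'n) set" where
  "Wsp V k = (if \<forall>j. \<not> j < k then V k else V k \<inter> orthogonal_comp (V (Max {j. j < k})))"

definition Wtop :: "('d::{finite,wellorder} \<Rightarrow> (real^'n) set) \<Rightarrow> (real^'n) set" where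
  "Wtop V = orthogonal_comp (V (Max UNIV))"

(* classical embedding into (R^{n x n})^d; the Euclidean inner product on
   real^'n^'n is tr(X^T Y) and on the 'd-fold power it is the sum *)
definition class_emb :: "('d::{finite,wellorder} \<Rightarrow> (real^'n) set) \<Rightarrow> (real^'n^'n)^('d::{finite,wellorder})" where
  "class_emb V = (\<chi> k. Qmat (Wsp V k))"

(* modified embedding into (R^{n x n})^d x R^{n x n} = (R^{n x n})^{d+1} *)
definition mod_emb :: "('d::{finite,wellorder} \<Rightarrow> (real^'n) set) \<Rightarrow> ((real^'n^'n)^('d::{finite,wellorder})) \<times> (real^'n^'n)" where
  "mod_emb V = (class_emb V, Qmat (Wtop V))"

definition kappa :: "((real^'n^'n)^('d::{finite,wellorder}) \<Rightarrow> real^'n^'n) \<Rightarrow> (real^'n^'n)^('d::{finite,wellorder}) \<Rightarrow> ((real^'n^'n)^('d::{finite,wellorder})) \<times> (real^'n^'n)" where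
  "kappa \<phi> A = (A, \<phi> A)"

(* Flag spanned by the column blocks of a matrix U (columns ordered by the
   well-order on 'n): V_k = span of the first ns k columns.  For U orthogonal
   this is the point U \<cdot> (standard flag) of Flag = O(n)/(O(m_1) x ... x O(m_{d+1})). *)
definition flag_of :: "('d::{finite,wellorder} \<Rightarrow> nat) \<Rightarrow> real^'n::{finite,wellorder}^('n::{finite,wellorder}) \<Rightarrow> ('d::{finite,wellorder}) \<Rightarrow> (real^('n::{finite,wellorder})) set" where
  "flag_of ns U = (\<lambda>k. span {column j U | j. card {i. i < j} < ns k})"

(* Smooth curves in the flag manifold: t \<mapsto> flag_of ns (U t) with U a smooth
   curve in O(n).  The squared length of the velocity of such a curve in the
   metric induced by an embedding emb: *)
definition induced_sqnorm ::
  "('d::{finite,wellorder} \<Rightarrow> nat) \<Rightarrow> ((('d::{finite,wellorder}) \<Rightarrow> (real^'n::{finite,wellorder}) set) \<Rightarrow> 'b::real_normed_vector)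
   \<Rightarrow> (real \<Rightarrow> real^('n::{finite,wellorder})^('n::{finite,wellorder})) \<Rightarrow> real \<Rightarrow> real" where
  "induced_sqnorm ns emb U t = (norm (vector_derivative (\<lambda>s. emb (flag_of ns (U s))) (at t)))\<^sup>2"

(* Two embeddings induce the same Riemannian metric on the flag manifold iff the
   induced quadratic forms agree on every tangent vector (polarization), i.e.
   along every smooth curve in the flag manifold. *)
definition same_metric ::
  "('d::{finite,wellorder} \<Rightarrow> nat) \<Rightarrow> ((('d::{finite,wellorder}) \<Rightarrow> (real^'n::{finite,wellorder}) set) \<Rightarrow> 'b::real_normed_vector)
   \<Rightarrow> ((('d::{finite,wellorder}) \<Rightarrow> (real^('n::{finite,wellorder})) set) \<Rightarrow> 'c::real_normed_vector) \<Rightarrow> bool" where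
  "same_metric ns e1 e2 \<longleftrightarrow>
     (\<forall>U. smooth_map U \<and> (\<forall>t. orthogonal_matrix (U t)) \<longrightarrow>
        (\<forall>t. induced_sqnorm ns e1 U t = induced_sqnorm ns e2 U t))"

end

theory Submission
  imports Defs
begin

text \<open>
  Every flag is spanned by the leading column blocks of an orthogonal matrix \<open>U\<close>, and then
  \<open>P\<^sub>k\<close> is the sum of the rank-one projections onto the columns of the \<open>k\<close>-th block.  So
  smooth curves of flags come from smooth curves \<open>U(t)\<close> in \<open>O(n)\<close>.

  (i) Along such a curve the velocity of \<open>\<kappa>\<^sub>\<phi> \<circ> \<epsilon>\<close> is \<open>(E', D\<phi> E')\<close>, where \<open>E'\<close> is the
  velocity of \<open>\<epsilon>\<close>.  Hence \<open>g\<^sup>\<phi> = g\<^sup>e\<close> iff \<open>\<phi> \<circ> \<epsilon>\<close> is constant along every smooth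
  curve of orthogonal matrices.  As a function of \<open>U\<close> it ignores the last column (because
  \<open>n\<^sub>d < n\<close>), and plane rotations join any two orthogonal matrices column by column once the
  last column is left free; so \<open>\<phi>\<close> is constant on the image of \<open>\<epsilon>\<close>.

  (ii) As \<open>P\<^sub>1 + \<dots> + P\<^sub>d\<^sub>+\<^sub>1 = I\<close>, the extra component \<open>Q\<^sub>d\<^sub>+\<^sub>1\<close> of the modified embedding
  equals \<open>(1 - d) I - (Q\<^sub>1 + \<dots> + Q\<^sub>d)\<close>, an affine function of \<open>\<epsilon>\<close>.
\<close>

lemma orthogonal_matrix_column_inner:
  fixes U :: "real^'n^'n"
  assumes "orthogonal_matrix U"
  shows "column i U \<bullet> column j U = (if i = j then 1 else 0)"
  using assms unfolding orthogonal_matrix_orthonormal_columns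
  by (auto simp: orthogonal_def norm_eq_1)

lemma orthogonal_matrix_column_expansion:
  fixes U :: "real^'n^'n"
  assumes "orthogonal_matrix U"
  shows "(\<Sum>a\<in>UNIV. (column a U \<bullet> x) *\<^sub>R column a U) = x"
proof -
  have "(transpose U *v x) $ a = column a U \<bullet> x" for a
    by (simp add: matrix_vector_mult_def transpose_def column_def inner_vec_def mult.commute)
  then have "(\<Sum>a\<in>UNIV. (column a U \<bullet> x) *\<^sub>R column a U) = U *v (transpose U *v x)"
    by (simp add: matrix_mult_sum scalar_mult_eq_scaleR)
  also have "\<dots> = x"
    using assms by (metis matrix_vector_mul_assoc matrix_vector_mul_lid orthogonal_matrix_def)
  finally show ?thesis .
qed

lemma orthogonal_comp_span_iff:
  "x \<in> orthogonal_comp (span S) \<longleftrightarrow> (\<forall>s\<in>S. s \<bullet> x = 0)"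
proof
  assume orth: "\<forall>s\<in>S. s \<bullet> x = 0"
  have "y \<bullet> x = 0" if "y \<in> span S" for y
    using that by (rule span_induct) (use orth in \<open>auto simp: subspace_def inner_add_left\<close>)
  then show "x \<in> orthogonal_comp (span S)"
    by (auto simp: orthogonal_comp_def orthogonal_def)
qed (auto simp: orthogonal_comp_def orthogonal_def intro: span_base)

definition column_span :: "real^'n^'n \<Rightarrow> 'n set \<Rightarrow> (real^'n) set" where
  "column_span U J = span ((\<lambda>j. column j U) ` J)"

definition outer :: "real^'n \<Rightarrow> real^'n \<Rightarrow> real^'n^'n" where
  "outer a b = (\<chi> i j. a $ i * b $ j)"

lemma outer_mult_vector: "outer a b *v x = (b \<bullet> x) *\<^sub>R a"
  by (simp add: outer_def vec_eq_iff matrix_vector_mult_def inner_vec_def sum_distrib_left mult_ac)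

definition column_proj :: "real^'n^'n \<Rightarrow> 'n set \<Rightarrow> real^'n^'n" where
  "column_proj U J = (\<Sum>a\<in>J. outer (column a U) (column a U))"

lemma column_proj_mult_vector:
  fixes U :: "real^'n^'n"
  shows "column_proj U J *v x = (\<Sum>a\<in>J. (column a U \<bullet> x) *\<^sub>R column a U)"
proof -
  have lin: "linear (\<lambda>A::real^'n^'n. A *v x)"
    by (rule linearI) (simp_all add: matrix_vector_mult_add_rdistrib scaleR_matrix_vector_assoc)
  show ?thesis
    unfolding column_proj_def linear_sum[OF lin] by (simp add: outer_mult_vector)
qed

lemma mem_column_span_iff:
  fixes U :: "real^'n^'n"
  assumes U: "orthogonal_matrix U"
  shows "x \<in> column_span U J \<longleftrightarrow> (\<forall>j. j \<notin> J \<longrightarrow> column j U \<bullet> x = 0)"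
proof
  assume x: "x \<in> column_span U J"
  show "\<forall>j. j \<notin> J \<longrightarrow> column j U \<bullet> x = 0"
  proof (intro allI impI)
    fix j assume "j \<notin> J"
    then have "column j U \<in> orthogonal_comp (column_span U J)"
      unfolding column_span_def orthogonal_comp_span_iff
      by (auto simp: orthogonal_matrix_column_inner[OF U])
    with x show "column j U \<bullet> x = 0"
      by (auto simp: orthogonal_comp_def orthogonal_def inner_commute)
  qed
next
  assume "\<forall>j. j \<notin> J \<longrightarrow> column j U \<bullet> x = 0"
  then have "x = (\<Sum>a\<in>J. (column a U \<bullet> x) *\<^sub>R column a U)"
    by (subst (1) orthogonal_matrix_column_expansion[OF U, symmetric])
      (auto intro: sum.mono_neutral_right)
  also have "\<dots> \<in> column_span U J"
    unfolding column_span_def by (intro span_sum span_mul span_base) auto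
  finally show "x \<in> column_span U J" .
qed

lemma orthogonal_comp_column_span:
  fixes U :: "real^'n^'n"
  assumes "orthogonal_matrix U"
  shows "orthogonal_comp (column_span U J) = column_span U (- J)"
proof (rule set_eqI)
  fix x
  have "x \<in> orthogonal_comp (column_span U J) \<longleftrightarrow> (\<forall>j\<in>J. column j U \<bullet> x = 0)"
    by (simp add: column_span_def orthogonal_comp_span_iff)
  also have "\<dots> \<longleftrightarrow> x \<in> column_span U (- J)"
    by (simp add: mem_column_span_iff[OF assms] Ball_def)
  finally show "x \<in> orthogonal_comp (column_span U J) \<longleftrightarrow> x \<in> column_span U (- J)" .
qed

lemma column_span_Int:
  fixes U :: "real^'n^'n"
  assumes "orthogonal_matrix U"
  shows "column_span U A \<inter> column_span U B = column_span U (A \<inter> B)"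
  by (rule set_eqI) (simp add: mem_column_span_iff[OF assms], blast)

lemma dim_column_span:
  fixes U :: "real^'n^'n"
  assumes U: "orthogonal_matrix U"
  shows "dim (column_span U J) = card J"
proof -
  have "inj (\<lambda>j. column j U)"
    by (rule injI) (metis orthogonal_matrix_column_inner[OF U] zero_neq_one)
  then have card: "card ((\<lambda>j. column j U) ` J) = card J"
    by (simp add: card_image inj_on_subset)
  have "pairwise orthogonal ((\<lambda>j. column j U) ` J)"
    by (auto simp: pairwise_def orthogonal_def orthogonal_matrix_column_inner[OF U])
  moreover have "column j U \<noteq> 0" for j
    using orthogonal_matrix_column_inner[OF U, of j j] by auto
  then have "0 \<notin> (\<lambda>j. column j U) ` J"
    by auto
  ultimately have indep: "independent ((\<lambda>j. column j U) ` J)"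
    by (rule pairwise_orthogonal_independent)
  show ?thesis
    using card by (simp add: column_span_def dim_eq_card_independent[OF indep])
qed

lemma orth_proj_vec_eqI:
  assumes W: "subspace W" and y: "y \<in> W" and xy: "x - y \<in> orthogonal_comp W"
  shows "orth_proj_vec W x = y"
  unfolding orth_proj_vec_def
proof (rule the_equality)
  fix z assume z: "z \<in> W \<and> x - z \<in> orthogonal_comp W"
  have "z - y \<in> W"
    using W y z by (simp add: subspace_diff)
  moreover have "z - y \<in> orthogonal_comp W"
    using subspace_diff[OF subspace_orthogonal_comp xy conjunct2[OF z]] by simp
  ultimately have "z - y \<in> W \<inter> orthogonal_comp W"
    by blast
  then show "z = y"
    by (simp add: orthogonal_Int_0[OF W])
next
  show "y \<in> W \<and> x - y \<in> orthogonal_comp W"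
    using y xy ..
qed

lemma proj_mat_column_span:
  fixes U :: "real^'n^'n"
  assumes U: "orthogonal_matrix U"
  shows "proj_mat (column_span U J) = column_proj U J"
proof -
  have "orth_proj_vec (column_span U J) x = column_proj U J *v x" for x
  proof (rule orth_proj_vec_eqI)
    show "subspace (column_span U J)" by (simp add: column_span_def)
    show "column_proj U J *v x \<in> column_span U J"
      unfolding column_proj_mult_vector column_span_def by (intro span_sum span_mul span_base) auto
    have "column j U \<bullet> (column_proj U J *v x) = column j U \<bullet> x" if "j \<in> J" for j
      using that by (simp add: column_proj_mult_vector inner_sum_right orthogonal_matrix_column_inner[OF U]
          if_distrib[of "\<lambda>t. _ * t"] cong: if_cong)
    then show "x - column_proj U J *v x \<in> orthogonal_comp (column_span U J)"
      by (simp add: column_span_def orthogonal_comp_span_iff inner_diff_right)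
  qed
  then have "orth_proj_vec (column_span U J) = (\<lambda>x. column_proj U J *v x)" ..
  then show ?thesis
    by (simp add: proj_mat_def)
qed

lemma column_proj_UNIV:
  fixes U :: "real^'n^'n"
  assumes "orthogonal_matrix U"
  shows "column_proj U UNIV = mat 1"
  by (simp add: matrix_eq column_proj_mult_vector orthogonal_matrix_column_expansion[OF assms])

definition pos :: "'n::{finite,wellorder} \<Rightarrow> nat" where
  "pos j = card {i. i < j}"

lemma strict_mono_pos: "strict_mono (pos :: 'n::{finite,wellorder} \<Rightarrow> nat)"
  unfolding strict_mono_def pos_def by (auto intro: psubset_card_mono)

lemma inj_pos: "inj (pos :: 'n::{finite,wellorder} \<Rightarrow> nat)"
  by (rule strict_mono_imp_inj_on[OF strict_mono_pos])

lemma pos_less_card: "pos (j :: 'n::{finite,wellorder}) < CARD('n)"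
  unfolding pos_def by (rule psubset_card_mono) auto

lemma range_pos: "range (pos :: 'n::{finite,wellorder} \<Rightarrow> nat) = {..<CARD('n)}"
proof (rule card_subset_eq)
  show "range (pos :: 'n \<Rightarrow> nat) \<subseteq> {..<CARD('n)}"
    using pos_less_card by auto
qed (simp_all add: card_image inj_pos)

lemma card_pos_less:
  assumes "m \<le> CARD('n::{finite,wellorder})"
  shows "card {j::'n. pos j < m} = m"
proof -
  have "pos ` {j::'n. pos j < m} = {..<m}"
    using range_pos assms by (auto simp: image_iff)
  then show ?thesis
    by (metis card_image card_lessThan inj_on_subset inj_pos subset_UNIV)
qed

definition block :: "('d::{finite,wellorder} \<Rightarrow> nat) \<Rightarrow> 'd \<Rightarrow> 'n::{finite,wellorder} set" where
  "block ns k = {j. pos j < ns k \<and> (\<forall>p<k. ns p \<le> pos j)}"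

lemma disjoint_blocks: "k \<noteq> k' \<Longrightarrow> block ns k \<inter> block ns k' = {}"
  by (auto simp: block_def neq_iff dest: leD)

lemma Union_blocks:
  assumes "strict_mono ns"
  shows "(\<Union>k. block ns k) = {j. pos j < ns (Max UNIV)}"
proof (intro set_eqI iffI)
  fix j assume "j \<in> (\<Union>k. block ns k)"
  then obtain k where "pos j < ns k" by (auto simp: block_def)
  moreover have "ns k \<le> ns (Max UNIV)"
    using assms by (simp add: strict_mono_less_eq)
  ultimately show "j \<in> {j. pos j < ns (Max UNIV)}" by simp
next
  fix j assume "j \<in> {j. pos j < ns (Max UNIV)}"
  then have "j \<in> block ns (LEAST k. pos j < ns k)"
    unfolding block_def by (auto intro: LeastI dest: not_less_Least)
  then show "j \<in> (\<Union>k. block ns k)" by blast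
qed

lemma flag_of_eq_column_span: "flag_of ns U k = column_span U {j. pos j < ns k}"
  unfolding flag_of_def column_span_def pos_def by (rule arg_cong[where f = span]) auto

lemma Wsp_flag_of:
  assumes U: "orthogonal_matrix U" and ns: "strict_mono ns"
  shows "Wsp (flag_of ns U) k = column_span U (block ns k)"
proof (cases "\<exists>p. p < k")
  case False
  then show ?thesis by (simp add: Wsp_def flag_of_eq_column_span block_def)
next
  case True
  define p0 where "p0 = Max {p. p < k}"
  have "\<And>p. p < k \<Longrightarrow> ns p \<le> ns p0"
    using True ns by (auto simp: p0_def strict_mono_less_eq)
  moreover have "p0 < k"
    using True by (auto simp: p0_def)
  ultimately have block: "block ns k = {j. pos j < ns k} \<inter> - {j. pos j < ns p0}"
    by (auto simp: block_def not_less intro: order_trans[of _ "ns p0"])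
  have "Wsp (flag_of ns U) k = flag_of ns U k \<inter> orthogonal_comp (flag_of ns U p0)"
    unfolding Wsp_def p0_def using True by (subst if_not_P) auto
  then show ?thesis
    by (simp add: flag_of_eq_column_span orthogonal_comp_column_span[OF U] column_span_Int[OF U] block)
qed

lemma Wtop_flag_of:
  assumes "orthogonal_matrix U"
  shows "Wtop (flag_of ns U) = column_span U {j. ns (Max UNIV) \<le> pos j}"
  by (simp add: Wtop_def flag_of_eq_column_span orthogonal_comp_column_span[OF assms]
      Collect_neg_eq[symmetric] not_less)

lemma class_emb_flag_of:
  assumes "orthogonal_matrix U" and "strict_mono ns"
  shows "class_emb (flag_of ns U) = (\<chi> k. 2 *\<^sub>R column_proj U (block ns k) - mat 1)"
  by (simp add: class_emb_def Qmat_def Wsp_flag_of[OF assms] proj_mat_column_span[OF assms(1)])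

lemma Qmat_Wtop_flag_of:
  assumes "orthogonal_matrix U"
  shows "Qmat (Wtop (flag_of ns U)) = 2 *\<^sub>R column_proj U {j. ns (Max UNIV) \<le> pos j} - mat 1"
  by (simp add: Qmat_def Wtop_flag_of[OF assms] proj_mat_column_span[OF assms])

lemma column_proj_Un:
  "A \<inter> B = {} \<Longrightarrow> column_proj U (A \<union> B) = column_proj U A + column_proj U B"
  by (simp add: column_proj_def sum.union_disjoint)

lemma sum_column_proj_blocks:
  assumes U: "orthogonal_matrix U" and ns: "strict_mono ns"
  shows "(\<Sum>k\<in>UNIV. column_proj U (block ns k)) + column_proj U {j. ns (Max UNIV) \<le> pos j} = mat 1"
proof -
  have "(\<Sum>k\<in>UNIV. column_proj U (block ns k)) = column_proj U (\<Union>k. block ns k)"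
    unfolding column_proj_def by (rule sum.UNION_disjoint[symmetric]) (auto simp: disjoint_blocks)
  also have "\<dots> = column_proj U {j. pos j < ns (Max UNIV)}"
    by (simp add: Union_blocks[OF ns])
  finally have "(\<Sum>k\<in>UNIV. column_proj U (block ns k)) + column_proj U {j. ns (Max UNIV) \<le> pos j}
      = column_proj U ({j. pos j < ns (Max UNIV)} \<union> {j. ns (Max UNIV) \<le> pos j})"
    by (simp add: column_proj_Un disjoint_iff)
  also have "\<dots> = mat 1"
    using column_proj_UNIV[OF U] by (simp add: Un_def not_less[symmetric])
  finally show ?thesis .
qed

definition last_reflection :: "(real^'n^'n)^'d \<Rightarrow> real^'n^'n" where
  "last_reflection A = (1 - real CARD('d)) *\<^sub>R mat 1 - (\<Sum>k\<in>UNIV. A $ k)"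

lemma last_reflection_class_emb_flag_of:
  fixes ns :: "'d::{finite,wellorder} \<Rightarrow> nat"
  assumes U: "orthogonal_matrix U" and ns: "strict_mono ns"
  shows "last_reflection (class_emb (flag_of ns U)) = Qmat (Wtop (flag_of ns U))"
proof -
  let ?P = "\<lambda>k. column_proj U (block ns k)" and ?Ptop = "column_proj U {j. ns (Max UNIV) \<le> pos j}"
  have "last_reflection (class_emb (flag_of ns U))
      = (1 - real CARD('d)) *\<^sub>R mat 1 - (2 *\<^sub>R (\<Sum>k\<in>UNIV. ?P k) - real CARD('d) *\<^sub>R mat 1)"
    by (simp add: last_reflection_def class_emb_flag_of[OF U ns] sum_subtractf scaleR_sum_right
        scaleR_conv_of_real sum_distrib_left)
  also have "\<dots> = 2 *\<^sub>R ?Ptop - mat 1"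
  proof -
    have "(\<Sum>k\<in>UNIV. ?P k) = mat 1 - ?Ptop"
      using sum_column_proj_blocks[OF U ns] by (simp only: eq_diff_eq)
    then show ?thesis
      by (simp only: scaleR_diff_right scaleR_diff_left) (simp add: scaleR_2)
  qed
  finally show ?thesis
    by (simp add: Qmat_Wtop_flag_of[OF U])
qed

lemma flag_of_in_flags:
  fixes U :: "real^('n::{finite,wellorder})^('n::{finite,wellorder})"
  assumes U: "orthogonal_matrix U" and ns: "strict_mono ns" and le: "\<And>k. ns k \<le> CARD('n)"
  shows "flag_of ns U \<in> flags ns"
proof -
  have dim: "dim (flag_of ns U k) = ns k" for k
    by (simp add: flag_of_eq_column_span dim_column_span[OF U] card_pos_less le)
  have "flag_of ns U j \<subset> flag_of ns U k" if "j < k" for j k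
  proof -
    have "ns j < ns k" using ns that by (simp add: strict_mono_less)
    then have "flag_of ns U j \<subseteq> flag_of ns U k"
      unfolding flag_of_eq_column_span column_span_def by (intro span_mono) auto
    with dim[of j] dim[of k] \<open>ns j < ns k\<close> show ?thesis by auto
  qed
  moreover have "subspace (flag_of ns U k)" for k
    by (simp add: flag_of_eq_column_span column_span_def)
  ultimately show ?thesis
    by (simp add: flags_def dim)
qed

lemma flag_of_cong:
  fixes U U' :: "real^('n::{finite,wellorder})^('n::{finite,wellorder})"
  assumes "\<And>j. pos j < CARD('n) - 1 \<Longrightarrow> column j U = column j U'" and "\<And>k. ns k < CARD('n)"
  shows "flag_of ns U = flag_of ns U'"
proof -
  have "(\<lambda>j. column j U) ` {j. pos j < ns k} = (\<lambda>j. column j U') ` {j. pos j < ns k}" for k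
  proof (rule image_cong)
    show "column j U = column j U'" if "j \<in> {j. pos j < ns k}" for j
      using assms(2)[of k] that by (intro assms(1)) simp
  qed simp
  then show ?thesis
    by (simp add: fun_eq_iff flag_of_eq_column_span column_span_def)
qed

lemma smooth_map_imp_differentiable:
  assumes "smooth_map f"
  shows "f differentiable (at x)"
  using assms by (cases rule: smooth_map.cases) (auto simp: differentiable_def)

lemma smooth_map_affine:
  fixes l :: "'a::euclidean_space \<Rightarrow> 'b::euclidean_space"
  assumes "bounded_linear l"
  shows "smooth_map (\<lambda>x. c + l x)"
  using assms
proof (coinduction arbitrary: c l)
  case smooth_map
  show ?case
  proof (intro exI[of _ "\<lambda>x. c + l x"] exI[of _ "\<lambda>_. l"] conjI allI refl)
    show "((\<lambda>x. c + l x) has_derivative l) (at x)" for x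
      using smooth_map by (auto intro!: derivative_eq_intros bounded_linear_imp_has_derivative)
    show "(\<exists>c' l'. (\<lambda>_. l v) = (\<lambda>x. c' + l' x) \<and> bounded_linear l') \<or> smooth_map (\<lambda>_. l v)" for v
      by (intro disjI1 exI[of _ "l v"] exI[of _ "\<lambda>_. 0"]) auto
  qed
qed

lemma smooth_map_bounded_linear_compose:
  fixes l :: "'b::euclidean_space \<Rightarrow> 'c::euclidean_space"
  assumes "bounded_linear l" and "smooth_map f"
  shows "smooth_map (\<lambda>x. l (f x))"
  using assms
proof (coinduction arbitrary: f)
  case smooth_map
  from smooth_map(2) obtain f' where f': "\<And>x. (f has_derivative f' x) (at x)"
    and "\<And>v. smooth_map (\<lambda>x. f' x v)"
    by (cases rule: smooth_map.cases) blast
  moreover have "((\<lambda>x. l (f x)) has_derivative (\<lambda>v. l (f' x v))) (at x)" for x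
    using bounded_linear.has_derivative[OF smooth_map(1) f'] .
  ultimately show ?case
    using smooth_map(1) by (intro exI[of _ "\<lambda>x. l (f x)"] exI[of _ "\<lambda>x v. l (f' x v)"]) auto
qed

lemma smooth_map_cos_sin:
  fixes A B C :: "'a::euclidean_space"
  shows "smooth_map (\<lambda>t::real. A + cos t *\<^sub>R B + sin t *\<^sub>R C)"
proof (coinduction arbitrary: A B C)
  case smooth_map
  show ?case
  proof (intro exI[of _ "\<lambda>t. A + cos t *\<^sub>R B + sin t *\<^sub>R C"]
      exI[of _ "\<lambda>x h. h *\<^sub>R (cos x *\<^sub>R C - sin x *\<^sub>R B)"] conjI allI refl)
    show "((\<lambda>t. A + cos t *\<^sub>R B + sin t *\<^sub>R C) has_derivative (\<lambda>h. h *\<^sub>R (cos x *\<^sub>R C - sin x *\<^sub>R B))) (at x)" for x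
      by (auto intro!: derivative_eq_intros simp: algebra_simps)
    show "(\<exists>A' B' C'. (\<lambda>x. v *\<^sub>R (cos x *\<^sub>R C - sin x *\<^sub>R B)) = (\<lambda>t. A' + cos t *\<^sub>R B' + sin t *\<^sub>R C'))
        \<or> smooth_map (\<lambda>x. v *\<^sub>R (cos x *\<^sub>R C - sin x *\<^sub>R B))" for v
      by (intro disjI1 exI[of _ 0] exI[of _ "v *\<^sub>R C"] exI[of _ "- (v *\<^sub>R B)"]) (simp add: fun_eq_iff algebra_simps)
  qed
qed

lemma smooth_map_last_reflection: "smooth_map (last_reflection :: (real^'n^'n)^'d \<Rightarrow> _)"
proof -
  have "bounded_linear (\<lambda>A::(real^'n^'n)^'d. - (\<Sum>k\<in>UNIV. A $ k))"
    by (intro bounded_linear_minus bounded_linear_sum bounded_linear_vec_nth)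
  then have "smooth_map (\<lambda>A::(real^'n^'n)^'d. (1 - real CARD('d)) *\<^sub>R mat 1 + - (\<Sum>k\<in>UNIV. A $ k))"
    by (rule smooth_map_affine)
  then show ?thesis
    by (simp add: last_reflection_def[abs_def])
qed

lemma differentiable_vec_lambdaI:
  fixes f :: "'a::real_normed_vector \<Rightarrow> 'b::euclidean_space^'i"
  assumes "\<And>i. (\<lambda>x. f x $ i) differentiable (at a)"
  shows "f differentiable (at a)"
  unfolding differentiable_componentwise_within[of f]
proof
  fix b :: "'b^'i" assume "b \<in> Basis"
  then obtain i u where "b = axis i u"
    by (auto simp: Basis_vec_def)
  then show "(\<lambda>x. f x \<bullet> b) differentiable (at a)"
    using differentiable_inner[OF assms differentiable_const, of i u] by (simp add: inner_axis)
qed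

lemma differentiable_class_emb_flag_of:
  fixes U :: "real \<Rightarrow> real^('n::{finite,wellorder})^('n::{finite,wellorder})" and ns :: "'d::{finite,wellorder} \<Rightarrow> nat"
  assumes U: "\<And>s. orthogonal_matrix (U s)" and dU: "U differentiable (at t)" and ns: "strict_mono ns"
  shows "(\<lambda>s. class_emb (flag_of ns (U s))) differentiable (at t)"
proof -
  have entry: "(\<lambda>s. U s $ i $ a) differentiable (at t)" for i a
  proof -
    have "bounded_linear (\<lambda>M::real^('n::{finite,wellorder})^('n::{finite,wellorder}). M $ i $ a)"
      by (intro bounded_linear_compose[OF bounded_linear_vec_nth] bounded_linear_vec_nth)
    from differentiable_compose[OF bounded_linear_imp_differentiable[OF this] dU] show ?thesis
      by (simp add: o_def)
  qed
  have "column_proj (U s) J $ i $ j = (\<Sum>a\<in>J. U s $ i $ a * U s $ j $ a)" for s J i j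
    by (simp add: column_proj_def outer_def column_def sum_component)
  then show ?thesis
    by (simp add: class_emb_flag_of[OF U ns] entry differentiable_vec_lambdaI
        differentiable_sum differentiable_mult differentiable_diff differentiable_scaleR)
qed

lemma norm_vector_derivative_Pair_const:
  assumes "E differentiable (at t)"
  shows "norm (vector_derivative (\<lambda>s. (E s, c)) (at t)) = norm (vector_derivative E (at t))"
proof -
  have "((\<lambda>s. (E s, c)) has_vector_derivative (vector_derivative E (at t), 0)) (at t)"
    using assms by (intro has_vector_derivative_Pair) (auto simp: vector_derivative_works)
  then show ?thesis
    by (simp add: vector_derivative_at)
qed

lemma has_vector_derivative_zero_if_graph_speed_eq:
  fixes E :: "real \<Rightarrow> 'a::real_normed_vector" and \<psi> :: "'a \<Rightarrow> 'b::real_normed_vector"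
  assumes d\<psi>: "\<psi> differentiable (at (E t))" and dE: "E differentiable (at t)"
    and speed: "norm (vector_derivative (\<lambda>s. (E s, \<psi> (E s))) (at t)) = norm (vector_derivative E (at t))"
  shows "((\<lambda>s. \<psi> (E s)) has_vector_derivative 0) (at t)"
proof -
  obtain \<psi>' where \<psi>': "(\<psi> has_derivative \<psi>') (at (E t))"
    using d\<psi> by (auto simp: differentiable_def)
  define E' where "E' = vector_derivative E (at t)"
  have vE: "(E has_vector_derivative E') (at t)"
    using dE by (simp add: vector_derivative_works E'_def)
  have v\<psi>: "((\<lambda>s. \<psi> (E s)) has_vector_derivative \<psi>' E') (at t)"
    using diff_chain_at[OF vE[unfolded has_vector_derivative_def] \<psi>']
      linear_cmul[OF has_derivative_linear[OF \<psi>']]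
    by (simp add: has_vector_derivative_def o_def)
  have "vector_derivative (\<lambda>s. (E s, \<psi> (E s))) (at t) = (E', \<psi>' E')"
    by (rule vector_derivative_at[OF has_vector_derivative_Pair[OF vE v\<psi>]])
  with speed have "sqrt ((norm E')\<^sup>2 + (norm (\<psi>' E'))\<^sup>2) = norm E'"
    by (simp add: norm_Pair E'_def)
  then have "(norm E')\<^sup>2 + (norm (\<psi>' E'))\<^sup>2 = (norm E')\<^sup>2"
    using real_sqrt_pow2[of "(norm E')\<^sup>2 + (norm (\<psi>' E'))\<^sup>2"] by simp
  then have "\<psi>' E' = 0" by simp
  with v\<psi> show ?thesis by simp
qed

lemma orthonormal_sequence_in_chain:
  fixes S :: "nat \<Rightarrow> 'a::euclidean_space set"
  assumes S: "\<And>i. subspace (S i)" "mono S" and dim: "\<And>i. i < m \<Longrightarrow> i < dim (S i)"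
  shows "\<exists>b. \<forall>i<m. b i \<in> S i \<and> norm (b i) = 1 \<and> (\<forall>j<i. b j \<bullet> b i = 0)"
  using dim
proof (induction m)
  case (Suc m)
  then obtain b where b: "\<forall>i<m. b i \<in> S i \<and> norm (b i) = 1 \<and> (\<forall>j<i. b j \<bullet> b i = 0)"
    by auto
  let ?B = "b ` {..<m}"
  have "b i \<in> S m" if "i < m" for i
    using b that monoD[OF S(2), of i m] by auto
  then have "span ?B \<subseteq> span (S m)"
    by (intro span_mono) auto
  moreover have "dim ?B < dim (S m)"
  proof -
    have "dim ?B \<le> card ?B"
      by (intro dim_le_card span_superset) simp
    also have "\<dots> \<le> m"
      using card_image_le[of "{..<m}" b] by simp
    finally show ?thesis
      using Suc.prems[of m] by simp
  qed
  ultimately have "span ?B \<subset> span (S m)"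
    by (metis dim_span less_irrefl psubsetI)
  then obtain x where "x \<noteq> 0" "x \<in> span (S m)" and x: "\<And>y. y \<in> span ?B \<Longrightarrow> orthogonal x y"
    by (rule orthogonal_to_subspace_exists_gen) blast
  define x' where "x' = x /\<^sub>R norm x"
  have "x \<in> S m"
    using \<open>x \<in> span (S m)\<close> S(1) by (metis span_eq_iff)
  then have "x' \<in> S m"
    by (simp add: x'_def subspace_scale S(1))
  moreover have "norm x' = 1"
    using \<open>x \<noteq> 0\<close> by (simp add: x'_def)
  moreover have "b j \<bullet> x' = 0" if "j < m" for j
    using x[of "b j"] that by (simp add: x'_def span_base orthogonal_def inner_commute)
  ultimately show ?case
    using b by (intro exI[of _ "b(m := x')"]) (auto simp: less_Suc_eq)
qed simp

lemma orthogonal_matrix_if_columns_orthonormal: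
  fixes U :: "real^('n::{finite,wellorder})^('n::{finite,wellorder})" and b :: "nat \<Rightarrow> real^('n::{finite,wellorder})"
  assumes col: "\<And>c. column c U = b (pos c)"
    and b: "\<forall>i<CARD('n). norm (b i) = 1 \<and> (\<forall>j<i. b j \<bullet> b i = 0)"
  shows "orthogonal_matrix U"
  unfolding orthogonal_matrix_orthonormal_columns orthogonal_def col
proof (intro conjI allI impI)
  show "norm (b (pos i)) = 1" for i :: "'n::{finite,wellorder}"
    using b pos_less_card by blast
  show "b (pos i) \<bullet> b (pos j) = 0" if ij: "i \<noteq> j" for i j :: "'n::{finite,wellorder}"
  proof -
    consider "pos i < pos j" | "pos j < pos i"
      using ij inj_pos by (metis injD linorder_neqE_nat)
    then show ?thesis
      by cases (metis b pos_less_card inner_commute)+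
  qed
qed

lemma less_dim_Inter_flag:
  fixes V :: "'d::{finite,wellorder} \<Rightarrow> (real^'n::{finite,wellorder}) set"
  assumes V: "V \<in> flags ns" and i: "i < CARD('n)"
  shows "i < dim (\<Inter> (V ` {k. i < ns k}))"
proof (cases "\<exists>k. i < ns k")
  case True
  define k0 where "k0 = (LEAST k. i < ns k)"
  have "i < ns k0"
    using True by (auto simp: k0_def intro: LeastI_ex)
  moreover have "V k0 \<subseteq> V k" if "i < ns k" for k
  proof -
    have "k0 \<le> k"
      unfolding k0_def using that by (rule Least_le)
    then show ?thesis
      using V by (auto simp: flags_def order.order_iff_strict)
  qed
  then have "\<Inter> (V ` {k. i < ns k}) = V k0"
    using \<open>i < ns k0\<close> by blast
  ultimately show ?thesis
    using V by (simp add: flags_def)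
qed (use i in simp)

text \<open>\<open>S i\<close> below is the smallest member of the flag of dimension \<open>> i\<close> (or the whole
  space); an orthonormal sequence adapted to this chain gives the columns of \<open>U\<close>.\<close>

lemma flag_eq_flag_of_orthogonal:
  fixes V :: "'d::{finite,wellorder} \<Rightarrow> (real^'n::{finite,wellorder}) set"
  assumes V: "V \<in> flags ns" and bound: "\<And>k. ns k < CARD('n)"
  obtains U where "orthogonal_matrix U" "flag_of ns U = V"
proof -
  have Vsub: "\<And>k. subspace (V k)" and Vdim: "\<And>k. dim (V k) = ns k"
    using V by (auto simp: flags_def)
  define S where "S i = \<Inter> (V ` {k. i < ns k})" for i
  have "subspace (S i)" for i
    by (auto simp: S_def intro!: subspace_Inter Vsub)
  moreover have "mono S"
    by (rule monoI) (auto simp: S_def)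
  moreover have "i < dim (S i)" if "i < CARD('n)" for i
    unfolding S_def using V that by (rule less_dim_Inter_flag)
  ultimately obtain b where b: "\<forall>i<CARD('n). b i \<in> S i \<and> norm (b i) = 1 \<and> (\<forall>j<i. b j \<bullet> b i = 0)"
    using orthonormal_sequence_in_chain by blast
  define U :: "real^('n::{finite,wellorder})^('n::{finite,wellorder})" where "U = (\<chi> r c. b (pos c) $ r)"
  have col: "column c U = b (pos c)" for c
    by (simp add: U_def column_def)
  have U: "orthogonal_matrix U"
    using b by (intro orthogonal_matrix_if_columns_orthonormal[OF col]) blast
  have "flag_of ns U k = V k" for k
  proof (rule subspace_dim_equal)
    have "b (pos j) \<in> V k" if "pos j < ns k" for j :: "'n::{finite,wellorder}"
      using b pos_less_card that by (auto simp: S_def)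
    then show "flag_of ns U k \<subseteq> V k"
      unfolding flag_of_eq_column_span column_span_def using Vsub
      by (intro span_minimal) (auto simp: col)
    show "dim (V k) \<le> dim (flag_of ns U k)"
      using bound[of k] by (simp add: flag_of_eq_column_span dim_column_span[OF U] card_pos_less Vdim)
  qed (simp_all add: flag_of_eq_column_span column_span_def Vsub)
  with U that show ?thesis by blast
qed

definition plane_rotation :: "real^'n \<Rightarrow> real^'n \<Rightarrow> real \<Rightarrow> real^'n^'n" where
  "plane_rotation c w t =
     mat 1 + (cos t - 1) *\<^sub>R (outer c c + outer w w) + sin t *\<^sub>R (outer w c - outer c w)"

lemma plane_rotation_mult_vector:
  "plane_rotation c w t *v x =
     x + ((cos t - 1) * (c \<bullet> x) - sin t * (w \<bullet> x)) *\<^sub>R c + (sin t * (c \<bullet> x) + (cos t - 1) * (w \<bullet> x)) *\<^sub>R w"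
  by (simp add: plane_rotation_def matrix_vector_mult_add_rdistrib matrix_vector_mult_diff_rdistrib
      scaleR_matrix_vector_assoc[symmetric] outer_mult_vector algebra_simps)

lemma plane_rotation_0: "plane_rotation c w 0 = mat 1"
  by (simp add: plane_rotation_def)

lemma plane_rotation_fixes:
  "c \<bullet> y = 0 \<Longrightarrow> w \<bullet> y = 0 \<Longrightarrow> plane_rotation c w t *v y = y"
  by (simp add: plane_rotation_mult_vector)

lemma plane_rotation_first:
  assumes "c \<bullet> c = 1" and "c \<bullet> w = 0"
  shows "plane_rotation c w t *v c = cos t *\<^sub>R c + sin t *\<^sub>R w"
proof -
  have "w \<bullet> c = 0"
    using assms(2) by (simp add: inner_commute)
  then show ?thesis
    using assms by (simp add: plane_rotation_mult_vector scaleR_diff_left)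
qed

lemma orthogonal_matrix_plane_rotation:
  fixes c w :: "real^'n"
  assumes c: "c \<bullet> c = 1" and w: "w \<bullet> w = 1" and cw: "c \<bullet> w = 0"
  shows "orthogonal_matrix (plane_rotation c w t)"
proof -
  have expand: "(x + A *\<^sub>R c + B *\<^sub>R w) \<bullet> (y + A' *\<^sub>R c + B' *\<^sub>R w)
      = x \<bullet> y + A' * (c \<bullet> x) + B' * (w \<bullet> x) + A * (c \<bullet> y) + A * A' + B * (w \<bullet> y) + B * B'"
    for x y :: "real^'n" and A B A' B'
  proof -
    have "w \<bullet> c = 0" using cw by (simp add: inner_commute)
    then show ?thesis
      by (simp only: inner_add_left inner_add_right inner_scaleR_left inner_scaleR_right c w cw
          inner_commute[of x c] inner_commute[of x w]) (simp add: algebra_simps)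
  qed
  have "(plane_rotation c w t *v x) \<bullet> (plane_rotation c w t *v y) = x \<bullet> y" for x y
  proof -
    define p q p' q' where "p = c \<bullet> x" and "q = w \<bullet> x" and "p' = c \<bullet> y" and "q' = w \<bullet> y"
    define C S where "C = cos t" and "S = sin t"
    have SC: "S * S + C * C = 1"
      by (simp add: S_def C_def flip: power2_eq_square)
    have "(plane_rotation c w t *v x) \<bullet> (plane_rotation c w t *v y)
       = x \<bullet> y + ((C - 1) * p' - S * q') * p + (S * p' + (C - 1) * q') * q
         + ((C - 1) * p - S * q) * p' + ((C - 1) * p - S * q) * ((C - 1) * p' - S * q')
         + (S * p + (C - 1) * q) * q' + (S * p + (C - 1) * q) * (S * p' + (C - 1) * q')"
      unfolding plane_rotation_mult_vector expand p_def q_def p'_def q'_def C_def S_def ..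
    also have "\<dots> = x \<bullet> y + (p * p' + q * q') * (2 * (C - 1) + (C - 1) * (C - 1) + S * S)"
      by (simp add: algebra_simps)
    also have "\<dots> = x \<bullet> y"
      using SC by (simp add: algebra_simps)
    finally show ?thesis .
  qed
  then have "orthogonal_transformation (\<lambda>x. plane_rotation c w t *v x)"
    by (simp add: orthogonal_transformation_def matrix_vector_mul_linear)
  then show ?thesis
    by (simp add: orthogonal_transformation_matrix)
qed

lemma smooth_map_plane_rotation_mult:
  fixes c w :: "real^'n" and U :: "real^'m^'n"
  shows "smooth_map (\<lambda>t. plane_rotation c w t ** U)"
proof -
  let ?P = "outer c c + outer w w" and ?J = "outer w c - outer c w"
  have "linear (\<lambda>M::real^'n^'n. M ** U)"
  proof (rule linearI)
    show "(A + B) ** U = A ** U + B ** U" for A B :: "real^'n^'n"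
      by (simp add: vec_eq_iff matrix_matrix_mult_def sum.distrib distrib_right)
    show "(r *\<^sub>R A) ** U = r *\<^sub>R (A ** U)" for r and A :: "real^'n^'n"
      by (simp add: scalar_matrix_assoc)
  qed
  then have "bounded_linear (\<lambda>M::real^'n^'n. M ** U)"
    by (simp only: linear_conv_bounded_linear)
  from smooth_map_bounded_linear_compose[OF this smooth_map_cos_sin]
  have "smooth_map (\<lambda>t. (mat 1 - ?P + cos t *\<^sub>R ?P + sin t *\<^sub>R ?J) ** U)" .
  moreover have "plane_rotation c w t = mat 1 - ?P + cos t *\<^sub>R ?P + sin t *\<^sub>R ?J" for t
    by (simp add: plane_rotation_def algebra_simps)
  ultimately show ?thesis by simp
qed

lemma ex_plane_rotation_to:
  fixes c c' :: "real^'n" and F :: "(real^'n) set"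
  assumes c: "norm c = 1" and c': "norm c' = 1" and Fc: "\<forall>y\<in>F. c \<bullet> y = 0" and Fc': "\<forall>y\<in>F. c' \<bullet> y = 0"
    and F: "finite F" "card F + 2 \<le> CARD('n)"
  obtains w \<theta> where "w \<bullet> w = 1" "c \<bullet> w = 0" "\<forall>y\<in>F. w \<bullet> y = 0" "plane_rotation c w \<theta> *v c = c'"
proof -
  have cc: "c \<bullet> c = 1" and cc': "c' \<bullet> c' = 1" using c c' by (simp_all add: norm_eq_1)
  define a where "a = c \<bullet> c'"
  define z where "z = c' - a *\<^sub>R c"
  have cz: "c \<bullet> z = 0" and Fz: "\<forall>y\<in>F. z \<bullet> y = 0"
    using Fc Fc' by (simp_all add: z_def inner_diff_right inner_diff_left cc a_def)
  obtain w b where w: "w \<bullet> w = 1" "c \<bullet> w = 0" "\<forall>y\<in>F. w \<bullet> y = 0" and z: "z = b *\<^sub>R w"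
  proof (cases "z = 0")
    case False
    show ?thesis
      using that[of "z /\<^sub>R norm z" "norm z"] False cz Fz
      by (simp add: inner_commute[of _ z] flip: power2_norm_eq_inner)
  next
    case True \<comment> \<open>\<open>c' = \<plusminus>c\<close>: the dimension bound leaves room for a direction \<open>w\<close>\<close>
    have "dim (insert c F) \<le> card (insert c F)"
      using F by (intro dim_le_card) (auto intro: span_base)
    also have "\<dots> < DIM(real^'n)"
      using F by (simp add: card_insert_if)
    finally obtain x where "x \<noteq> 0" and x: "\<And>y. y \<in> span (insert c F) \<Longrightarrow> orthogonal x y"
      by (rule orthogonal_to_subspace_exists) blast
    define w where "w = x /\<^sub>R norm x"
    have "w \<bullet> w = 1"
      using \<open>x \<noteq> 0\<close> by (simp add: w_def flip: power2_norm_eq_inner power2_eq_square)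
    moreover have "orthogonal x y" if "y \<in> insert c F" for y
      using x that span_base by blast
    then have "c \<bullet> w = 0" "\<forall>y\<in>F. w \<bullet> y = 0"
      by (auto simp: w_def orthogonal_def inner_commute)
    ultimately show ?thesis
      using that[of w 0] True by simp
  qed
  have c'_eq: "c' = a *\<^sub>R c + b *\<^sub>R w"
    using z by (simp add: z_def algebra_simps)
  have "a\<^sup>2 + b\<^sup>2 = 1"
    using cc' w(1,2) unfolding c'_eq
    by (simp add: inner_add_left inner_add_right cc inner_commute[of w c] power2_eq_square)
  then obtain \<theta> where "a = cos \<theta>" "b = sin \<theta>"
    using sincos_total_2pi by metis
  then have "plane_rotation c w \<theta> *v c = c'"
    by (simp add: plane_rotation_first[OF cc w(2)] c'_eq)
  with w that show ?thesis by blast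
qed

lemma column_matrix_mult: "column j (A ** B) = A *v column j B"
  by (simp add: vec_eq_iff matrix_matrix_mult_def matrix_vector_mult_def column_def)

lemma orthogonal_curve_fixing_columns:
  fixes U U1 :: "real^'n^'n"
  assumes U: "orthogonal_matrix U" and U1: "orthogonal_matrix U1"
    and J: "card J + 2 \<le> CARD('n)" "j0 \<notin> J"
    and agree: "\<And>j. j \<in> J \<Longrightarrow> column j U = column j U1"
  obtains W :: "real \<Rightarrow> real^'n^'n" and \<theta>
  where "smooth_map W" "\<And>t. orthogonal_matrix (W t)" "W 0 = U"
    "\<And>j. j \<in> insert j0 J \<Longrightarrow> column j (W \<theta>) = column j U1"
proof -
  define F where "F = (\<lambda>j. column j U) ` J"
  have "card F + 2 \<le> CARD('n)"
    using J(1) card_image_le[of J "\<lambda>j. column j U"] by (simp add: F_def)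
  moreover have "\<forall>y\<in>F. column j0 U \<bullet> y = 0"
    using J(2) by (auto simp: F_def orthogonal_matrix_column_inner[OF U])
  moreover have "\<forall>y\<in>F. column j0 U1 \<bullet> y = 0"
    using J(2) agree by (auto simp: F_def orthogonal_matrix_column_inner[OF U1])
  moreover have "norm (column j0 U) = 1" "norm (column j0 U1) = 1"
    using U U1 by (simp_all add: orthogonal_matrix_orthonormal_columns)
  moreover have "finite F"
    by (simp add: F_def)
  ultimately obtain w \<theta> where w: "w \<bullet> w = 1" "column j0 U \<bullet> w = 0" "\<forall>y\<in>F. w \<bullet> y = 0"
    and rot: "plane_rotation (column j0 U) w \<theta> *v column j0 U = column j0 U1"
    by (metis ex_plane_rotation_to)
  define W where "W t = plane_rotation (column j0 U) w t ** U" for t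
  have "column j (W \<theta>) = column j U1" if "j \<in> insert j0 J" for j
  proof (cases "j \<in> J")
    case True
    then have "column j0 U \<bullet> column j U = 0" "w \<bullet> column j U = 0"
      using J(2) w(3) by (auto simp: F_def orthogonal_matrix_column_inner[OF U])
    then show ?thesis
      using agree[OF True] by (simp add: W_def column_matrix_mult plane_rotation_fixes)
  next
    case False
    then show ?thesis
      using that rot by (simp add: W_def column_matrix_mult)
  qed
  moreover have "smooth_map W"
    unfolding W_def[abs_def] by (rule smooth_map_plane_rotation_mult)
  moreover have "orthogonal_matrix (W t)" for t
    using orthogonal_matrix_column_inner[OF U, of j0 j0] w U
    by (simp add: W_def orthogonal_matrix_mul orthogonal_matrix_plane_rotation)
  moreover have "W 0 = U"
    by (simp add: W_def plane_rotation_0)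
  ultimately show ?thesis
    using that by blast
qed

text \<open>\<open>O(n)\<close> itself is disconnected; leaving the last column free is what makes the
  column-by-column rotation argument work.\<close>

lemma constant_on_orthogonal_matrices:
  fixes g :: "real^('n::{finite,wellorder})^('n::{finite,wellorder}) \<Rightarrow> 'b"
  assumes curve: "\<And>W (t::real). smooth_map W \<Longrightarrow> (\<And>t. orthogonal_matrix (W t)) \<Longrightarrow> g (W t) = g (W 0)"
    and last: "\<And>U U'. (\<And>j. pos j < CARD('n) - 1 \<Longrightarrow> column j U = column j U') \<Longrightarrow> g U = g U'"
    and U: "orthogonal_matrix U" and U1: "orthogonal_matrix U1"
  shows "g U = g U1"
proof -
  have "\<forall>U. orthogonal_matrix U \<and> (\<forall>j. pos j < m \<longrightarrow> column j U = column j U1) \<longrightarrow> g U = g U1"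
    if "m \<le> CARD('n) - 1" for m
    using that
  proof (induction m rule: inc_induct)
    case base
    show ?case
      by (blast intro: last)
  next
    case (step m)
    have "m \<in> range (pos :: 'n \<Rightarrow> nat)"
      using step.hyps by (simp add: range_pos)
    then obtain j0 :: 'n where j0: "pos j0 = m"
      by blast
    have next_column: "insert j0 {j. pos j < m} = {j. pos j < Suc m}"
      using j0 inj_pos by (auto simp: less_Suc_eq dest: injD)
    have card: "card {j :: 'n. pos j < m} + 2 \<le> CARD('n)"
      using step.hyps by (simp add: card_pos_less)
    show ?case
    proof (intro allI impI, elim conjE)
      fix U assume U: "orthogonal_matrix U" and agree: "\<forall>j. pos j < m \<longrightarrow> column j U = column j U1"
      obtain W :: "real \<Rightarrow> real^('n::{finite,wellorder})^('n::{finite,wellorder})" and \<theta>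
        where W: "smooth_map W" "\<And>t. orthogonal_matrix (W t)" "W 0 = U"
        and W\<theta>: "\<And>j. pos j < Suc m \<Longrightarrow> column j (W \<theta>) = column j U1"
        using orthogonal_curve_fixing_columns[OF U U1 card, of j0] j0 agree
        unfolding next_column by auto
      then have "g (W \<theta>) = g U1"
        using step.IH by blast
      moreover have "g (W \<theta>) = g (W 0)"
        by (rule curve[OF W(1) W(2)])
      ultimately show "g U = g U1"
        using W(3) by simp
    qed
  qed
  from this[of 0] U show ?thesis
    by simp
qed

lemma same_metric_kappa_class_emb_if_constant:
  fixes ns :: "'d::{finite,wellorder} \<Rightarrow> nat"
    and \<phi> :: "(real^('n::{finite,wellorder})^('n::{finite,wellorder}))^('d::{finite,wellorder}) \<Rightarrow> real^('n::{finite,wellorder})^('n::{finite,wellorder})"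
  assumes ns: "strict_mono ns" and bound: "\<And>k. ns k < CARD('n)"
    and const: "\<forall>V\<in>flags ns. \<phi> (class_emb V) = c"
  shows "same_metric ns (kappa \<phi> \<circ> class_emb) class_emb"
  unfolding same_metric_def
proof (intro allI impI, elim conjE)
  fix U :: "real \<Rightarrow> real^('n::{finite,wellorder})^('n::{finite,wellorder})" and t
  assume "smooth_map U" and U: "\<forall>t. orthogonal_matrix (U t)"
  then have "(\<lambda>s. class_emb (flag_of ns (U s))) differentiable (at t)"
    using ns by (intro differentiable_class_emb_flag_of smooth_map_imp_differentiable) auto
  moreover have "flag_of ns (U s) \<in> flags ns" for s
    using U bound by (intro flag_of_in_flags[OF _ ns]) (auto intro: less_imp_le)
  then have "(kappa \<phi> \<circ> class_emb) (flag_of ns (U s)) = (class_emb (flag_of ns (U s)), c)" for s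
    using const by (simp add: kappa_def)
  ultimately show "induced_sqnorm ns (kappa \<phi> \<circ> class_emb) U t = induced_sqnorm ns class_emb U t"
    by (simp add: induced_sqnorm_def norm_vector_derivative_Pair_const)
qed

lemma constant_if_same_metric_kappa_class_emb:
  fixes ns :: "'d::{finite,wellorder} \<Rightarrow> nat"
    and \<phi> :: "(real^('n::{finite,wellorder})^('n::{finite,wellorder}))^('d::{finite,wellorder}) \<Rightarrow> real^('n::{finite,wellorder})^('n::{finite,wellorder})"
  assumes ns: "strict_mono ns" and bound: "\<And>k. ns k < CARD('n)"
    and d\<phi>: "\<And>A. \<phi> differentiable (at A)"
    and same: "same_metric ns (kappa \<phi> \<circ> class_emb) class_emb"
  shows "\<exists>c. \<forall>V\<in>flags ns. \<phi> (class_emb V) = c"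
proof -
  define g where "g U = \<phi> (class_emb (flag_of ns U))" for U :: "real^('n::{finite,wellorder})^('n::{finite,wellorder})"
  have "g (W t) = g (W 0)" if W: "smooth_map W" "\<And>t. orthogonal_matrix (W t)" for W and t :: real
  proof -
    define E where "E s = (class_emb (flag_of ns (W s)) :: (real^('n::{finite,wellorder})^('n::{finite,wellorder}))^('d::{finite,wellorder}))" for s
    have "((\<lambda>s. \<phi> (E s)) has_vector_derivative 0) (at s)" for s
    proof (rule has_vector_derivative_zero_if_graph_speed_eq[OF d\<phi>])
      show dE: "E differentiable (at s)"
        unfolding E_def using W ns by (intro differentiable_class_emb_flag_of smooth_map_imp_differentiable)
      have "induced_sqnorm ns (kappa \<phi> \<circ> class_emb) W s = induced_sqnorm ns class_emb W s"
        using same W unfolding same_metric_def by blast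
      then show "norm (vector_derivative (\<lambda>s. (E s, \<phi> (E s))) (at s)) = norm (vector_derivative E (at s))"
        by (simp add: induced_sqnorm_def E_def[abs_def] kappa_def power2_eq_iff_nonneg)
    qed
    then obtain c where "\<And>s. \<phi> (E s) = c"
      using has_vector_derivative_zero_constant[of UNIV "\<lambda>s. \<phi> (E s)"] by auto
    then show ?thesis
      by (metis g_def E_def)
  qed
  moreover have "g U = g U'" if "\<And>j. pos j < CARD('n) - 1 \<Longrightarrow> column j U = column j U'" for U U'
    using flag_of_cong[where ns = ns, OF that bound] by (simp add: g_def)
  ultimately have "g U = g (mat 1)" if "orthogonal_matrix U" for U
    using constant_on_orthogonal_matrices[OF _ _ that orthogonal_matrix_id] by blast
  then have "\<phi> (class_emb V) = g (mat 1)" if "V \<in> flags ns" for V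
    using flag_eq_flag_of_orthogonal[OF that bound] by (metis g_def)
  then show ?thesis by blast
qed

lemma same_metric_kappa_class_emb_iff_constant:
  fixes ns :: "'d::{finite,wellorder} \<Rightarrow> nat"
    and \<phi> :: "(real^('n::{finite,wellorder})^('n::{finite,wellorder}))^('d::{finite,wellorder}) \<Rightarrow> real^('n::{finite,wellorder})^('n::{finite,wellorder})"
  assumes "strict_mono ns" and "\<And>k. ns k < CARD('n)" and "smooth_map \<phi>"
  shows "same_metric ns (kappa \<phi> \<circ> class_emb) class_emb \<longleftrightarrow> (\<exists>c. \<forall>V\<in>flags ns. \<phi> (class_emb V) = c)"
  using constant_if_same_metric_kappa_class_emb[OF assms(1,2) smooth_map_imp_differentiable[OF assms(3)]]
    same_metric_kappa_class_emb_if_constant[OF assms(1,2)] by blast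

lemma same_metric_kappa_last_reflection:
  fixes ns :: "'d::{finite,wellorder} \<Rightarrow> nat"
  assumes ns: "strict_mono ns"
  shows "same_metric ns (kappa last_reflection \<circ> class_emb)
           (mod_emb :: (('d::{finite,wellorder}) \<Rightarrow> (real^('n::{finite,wellorder})) set) \<Rightarrow> _)"
  unfolding same_metric_def
proof (intro allI impI, elim conjE)
  fix U :: "real \<Rightarrow> real^('n::{finite,wellorder})^('n::{finite,wellorder})" and t
  assume "\<forall>t. orthogonal_matrix (U t)"
  then have "(\<lambda>s. (kappa last_reflection \<circ> class_emb) (flag_of ns (U s))) = (\<lambda>s. mod_emb (flag_of ns (U s)))"
    by (simp add: kappa_def mod_emb_def last_reflection_class_emb_flag_of[OF _ ns])
  then show "induced_sqnorm ns (kappa last_reflection \<circ> class_emb) U t = induced_sqnorm ns mod_emb U t"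
    by (simp add: induced_sqnorm_def)
qed

theorem proposition5p2:
  fixes ns :: "'d::{finite,wellorder} \<Rightarrow> nat"
  assumes "strict_mono ns"
    and "\<And>k. 0 < ns k"
    and "\<And>k. ns k < CARD('n::{finite,wellorder})"
  shows "(\<forall>\<phi> :: (real^('n::{finite,wellorder})^('n::{finite,wellorder}))^('d::{finite,wellorder}) \<Rightarrow> real^('n::{finite,wellorder})^('n::{finite,wellorder}).
            smooth_map \<phi> \<longrightarrow>
            (same_metric ns (kappa \<phi> \<circ> class_emb) class_emb \<longleftrightarrow>
             (\<exists>c. \<forall>V \<in> flags ns. \<phi> (class_emb V) = c)))
       \<and> (\<forall>c :: real^('n::{finite,wellorder})^('n::{finite,wellorder}).
            same_metric ns (kappa (\<lambda>_. c) \<circ> class_emb) (class_emb :: _ \<Rightarrow> (real^('n::{finite,wellorder})^('n::{finite,wellorder}))^('d::{finite,wellorder})))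
       \<and> (\<exists>\<phi> :: (real^('n::{finite,wellorder})^('n::{finite,wellorder}))^('d::{finite,wellorder}) \<Rightarrow> real^('n::{finite,wellorder})^('n::{finite,wellorder}).
            smooth_map \<phi> \<and>
            same_metric ns (kappa \<phi> \<circ> class_emb) (mod_emb :: (('d::{finite,wellorder}) \<Rightarrow> (real^('n::{finite,wellorder})) set) \<Rightarrow> _))"
  using same_metric_kappa_class_emb_iff_constant[OF assms(1,3)]
    smooth_map_last_reflection same_metric_kappa_last_reflection[OF assms(1)]
  by (auto intro: same_metric_kappa_class_emb_if_constant[OF assms(1,3)])

end
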